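(* Let $n\ge1$, $q$ an indeterminate, $\mathcal F^n$ the Fock space with basis $|\lambda\rangle$ and dual basis $\langle\lambda|$ described in the context, with $z=1$, $Q^+(v)=\sum_r v^rQ^+_r$ the $Q^+$-operator, and $\tilde\beta_j(v)=Q^+(v)\beta_jQ^+(v)^{-1}=\sum_{b\ge0}v^b\tilde\beta_{j,b}$, $\tilde\beta^*_j(v)=Q^+(v)\beta^*_jQ^+(v)^{-1}=\sum_{b\ge0}v^b\tilde\beta^*_{j,b}$. Then for all $r\ge0$, all $j\in\{1,\dots,n\}$ and all partitions $\lambda,\mu$ with at most $n$ parts, $$\sum_{a+b=r}\sum_{\rho}(-1)^aN^{\tilde\rho}_{(a)\tilde\mu}(q)\,\langle\lambda|\tilde\beta_{j,b}|\rho\rangle=(-1)^r\,N^{\tilde\lambda}_{(r)\widetilde{\beta_j\mu}}(q),$$ $$\sum_{a+b=r}\sum_{\rho}\frac{(-1)^aN^{\tilde\rho}_{(a)\tilde\mu}(q)}{1-q^{2m_j(\mu)+2}}\,\langle\lambda|\tilde\beta^*_{j,b}|\rho\rangle=(-1)^r\,N^{\tilde\lambda}_{(r)\widetilde{\beta^*_j\mu}}(q),$$ where $\rho$ ranges over partitions with at most $n$ parts.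
   Context: $(q^2)_m:=\prod_{i=1}^m(1-q^{2i})$. $\mathcal F^n$: $\mathbb C(q)$-vector space with basis $|\lambda\rangle$, $\lambda$ partitions with at most $n$ parts; $m_j(\lambda)=\lambda_j-\lambda_{j+1}$ ($\lambda_{n+1}=0$) is the multiplicity of columns of height $j$ in the Young diagram of $\lambda$. $\langle\lambda|$ is the dual basis. Operators: $\beta_j^*|\lambda\rangle=(1-q^{2m_j(\lambda)+2})|\beta_j^*\lambda\rangle$, $\beta_j|\lambda\rangle=|\beta_j\lambda\rangle$ (zero if $m_j(\lambda)=0$), $q^{N_j}|\lambda\rangle=q^{m_j(\lambda)}|\lambda\rangle$, where $\beta_j^*\lambda$ (resp. $\beta_j\lambda$) denotes the partition obtained by inserting (resp. deleting) a column of height $j$ in the Young diagram. $Q^+(v)=\sum_r v^rQ^+_r$ with $Q^+_r=(-1)^r\sum_{\alpha}z^{\alpha_n}\frac{(\beta_1^* )^{\alpha_n}(\beta_1\beta_2^* )^{\alpha_1}\cdots(\beta_{n-1}\beta_n^* )^{\alpha_{n-1}}\beta_n^{\alpha_n}}{(q^2)_{\alpha_1}\cdots(q^2)_{\alpha_n}}$, the sum over compositions $\alpha\in\mathbb Z^n_{\ge0}$ of $r$, with $z=1$; $Q^+_0=1$ so $Q^+(v)$ is invertible as a power series in $v$. For a partition $\mu$, $\tilde\mu$ denotes $\mu$ with all columns of height $n$ removed. The (2D TQFT) fusion coefficients appearing here are $N^{\tilde\rho}_{(a)\tilde\mu}(q)=(-1)^a\langle\rho|Q^+_a|\mu\rangle$.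 If $\mu$ has no column of height $j$, $N^{\tilde\lambda}_{(r)\widetilde{\beta_j\mu}}$ is read as $0$. *)

theory Defs
  imports "HOL-Computational_Algebra.Polynomial" "HOL-Computational_Algebra.Fraction_Field"
begin

text \<open>Coefficient field C(q) = fractions of complex polynomials; q is the indeterminate.\<close>
type_synonym K = "complex poly fract"

text \<open>A partition with at most n parts is a function lam with lam i = lam_i for 1 <= i <= n,
  lam i = 0 for i = 0 and i > n, and lam_1 >= lam_2 >= ... .\<close>
type_synonym part = "nat \<Rightarrow> nat"

text \<open>An operator on F^n is given by its matrix: A lam mu = <lam|A|mu>.\<close>
type_synonym opr = "part \<Rightarrow> part \<Rightarrow> K"

definition qq :: K where "qq = Fract [:0, 1:] 1"

definition qpoch :: "nat \<Rightarrow> K" where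
  "qpoch m = (\<Prod>i=1..m. 1 - qq ^ (2 * i))"

definition is_part :: "nat \<Rightarrow> part \<Rightarrow> bool" where
  "is_part n lam \<longleftrightarrow> (\<forall>i. i = 0 \<or> n < i \<longrightarrow> lam i = 0) \<and> (\<forall>i. 1 \<le> i \<longrightarrow> lam (Suc i) \<le> lam i)"

text \<open>m_j(lam) = lam_j - lam_(j+1): number of columns of height j.\<close>
definition mult :: "nat \<Rightarrow> part \<Rightarrow> nat" where
  "mult j lam = lam j - lam (Suc j)"

definition ins_col :: "nat \<Rightarrow> part \<Rightarrow> part" where
  "ins_col j lam = (\<lambda>i. if 1 \<le> i \<and> i \<le> j then lam i + 1 else lam i)"

definition del_col :: "nat \<Rightarrow> part \<Rightarrow> part" where
  "del_col j lam = (\<lambda>i. if 1 \<le> i \<and> i \<le> j then lam i - 1 else lam i)"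

definition fsum :: "'a set \<Rightarrow> ('a \<Rightarrow> K) \<Rightarrow> K" where
  "fsum S f = sum f {x \<in> S. f x \<noteq> 0}"

definition op_id :: opr where
  "op_id lam mu = (if lam = mu then 1 else 0)"

text \<open>Composition of (column-finite) operators.\<close>
definition op_mult :: "opr \<Rightarrow> opr \<Rightarrow> opr" where
  "op_mult A B = (\<lambda>lam mu. fsum UNIV (\<lambda>rho. A lam rho * B rho mu))"

definition op_pow :: "opr \<Rightarrow> nat \<Rightarrow> opr" where
  "op_pow A k = (op_mult A ^^ k) op_id"

text \<open>beta_j |mu> = |beta_j mu> (0 if m_j(mu) = 0);
  beta_j^* |mu> = (1 - q^(2 m_j(mu) + 2)) |beta_j^* mu>.\<close>
definition beta :: "nat \<Rightarrow> opr" where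
  "beta j lam mu = (if 0 < mult j mu \<and> lam = del_col j mu then 1 else 0)"

definition betaS :: "nat \<Rightarrow> opr" where
  "betaS j lam mu = (if lam = ins_col j mu then 1 - qq ^ (2 * mult j mu + 2) else 0)"

definition comps :: "nat \<Rightarrow> nat \<Rightarrow> (nat \<Rightarrow> nat) set" where
  "comps n r = {alpha. (\<forall>i. alpha i \<noteq> 0 \<longrightarrow> 1 \<le> i \<and> i \<le> n) \<and> (\<Sum>i=1..n. alpha i) = r}"

definition Qterm :: "nat \<Rightarrow> (nat \<Rightarrow> nat) \<Rightarrow> opr" where
  "Qterm n alpha =
     op_mult (op_pow (betaS 1) (alpha n))
       (op_mult (foldr op_mult (map (\<lambda>i. op_pow (op_mult (beta i) (betaS (Suc i))) (alpha i)) [1..<n]) op_id)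
                (op_pow (beta n) (alpha n)))"

text \<open>Q^+_r with z = 1.\<close>
definition Qp :: "nat \<Rightarrow> nat \<Rightarrow> opr" where
  "Qp n r = (\<lambda>lam mu. (-1) ^ r * (\<Sum>alpha\<in>comps n r. Qterm n alpha lam mu / (\<Prod>i=1..n. qpoch (alpha i))))"

text \<open>Coefficients of Q^+(v)^(-1) (Q^+_0 = 1).\<close>
fun Qinv :: "nat \<Rightarrow> nat \<Rightarrow> opr" where
  "Qinv n 0 = op_id"
| "Qinv n (Suc d) = (\<lambda>lam mu. - (\<Sum>k\<in>{1..Suc d}. op_mult (Qp n k) (Qinv n (Suc d - k)) lam mu))"

text \<open>Coefficients of v^b in Q^+(v) beta_j Q^+(v)^(-1) and Q^+(v) beta_j^* Q^+(v)^(-1).\<close>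
definition tbeta :: "nat \<Rightarrow> nat \<Rightarrow> nat \<Rightarrow> opr" where
  "tbeta n j b = (\<lambda>lam mu. \<Sum>c\<le>b. op_mult (op_mult (Qp n c) (beta j)) (Qinv n (b - c)) lam mu)"

definition tbetaS :: "nat \<Rightarrow> nat \<Rightarrow> nat \<Rightarrow> opr" where
  "tbetaS n j b = (\<lambda>lam mu. \<Sum>c\<le>b. op_mult (op_mult (Qp n c) (betaS j)) (Qinv n (b - c)) lam mu)"

text \<open>Fusion coefficient N^{rho~}_{(a) mu~}(q) = (-1)^a <rho|Q^+_a|mu>.\<close>
definition Ncoef :: "nat \<Rightarrow> nat \<Rightarrow> part \<Rightarrow> part \<Rightarrow> K" where
  "Ncoef n a rho mu = (-1) ^ a * Qp n a rho mu"

end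

theory Submission
  imports Defs "HOL-Computational_Algebra.Formal_Power_Series"
begin

text \<open>Matrices indexed by partitions with finitely many nonzero entries in each column form
  a ring, over which Q^+(v) is a power series with constant term 1 and hence has a two-sided
  inverse. Therefore \<open>\<beta>~_j(v) Q^+(v) = Q^+(v) \<beta>_j\<close>, and the identities are the coefficient
  of v^r of this equation, read off in column \<open>\<mu>\<close>. On the left, \<open>\<rho>\<close> may be restricted to
  partitions with at most n parts because every \<open>Q^+_a\<close> preserves them; on the right, column
  \<open>\<mu>\<close> of \<open>\<beta>_j\<close> (resp. \<open>\<beta>^*_j\<close>) has the single entry at \<open>\<beta>_j\<mu>\<close> (resp. \<open>\<beta>^*_j\<mu>\<close>).\<close>

section \<open>Column-finite operators\<close>

definition col_supp :: "opr \<Rightarrow> part \<Rightarrow> part set" where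
  "col_supp A mu = {lam. A lam mu \<noteq> 0}"

lemma fsum_UNIV_eq_sum:
  assumes "finite T" "{x. f x \<noteq> 0} \<subseteq> T"
  shows "fsum UNIV f = sum f T"
  unfolding fsum_def by (rule sum.mono_neutral_left) (use assms in auto)

lemma op_mult_eq_sum:
  assumes "finite T" "col_supp B mu \<subseteq> T"
  shows "op_mult A B lam mu = (\<Sum>rho\<in>T. A lam rho * B rho mu)"
  unfolding op_mult_def by (rule fsum_UNIV_eq_sum) (use assms in \<open>auto simp: col_supp_def\<close>)

lemma fsum_neq_zeroD: "fsum S f \<noteq> 0 \<Longrightarrow> \<exists>x\<in>S. f x \<noteq> 0"
  unfolding fsum_def by (metis (mono_tags, lifting) mem_Collect_eq sum.not_neutral_contains_not_neutral)

lemma fsum_restrict_UNIV: "(\<And>x. f x \<noteq> 0 \<Longrightarrow> x \<in> S) \<Longrightarrow> fsum S f = fsum UNIV f"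
  unfolding fsum_def by (metis (mono_tags, lifting) UNIV_I)

lemma fsum_divide: "fsum S (\<lambda>x. f x / c) = fsum S f / c"
proof (cases "c = 0")
  case False
  then have "{x \<in> S. f x / c \<noteq> 0} = {x \<in> S. f x \<noteq> 0}" by auto
  then show ?thesis unfolding fsum_def using False by (simp add: sum_divide_distrib)
qed (simp add: fsum_def)

lemma op_mult_neq_zeroD: "op_mult A B lam mu \<noteq> 0 \<Longrightarrow> \<exists>rho. A lam rho \<noteq> 0 \<and> B rho mu \<noteq> 0"
  unfolding op_mult_def using fsum_neq_zeroD by fastforce

lemma col_supp_op_mult: "col_supp (op_mult A B) mu \<subseteq> (\<Union>rho\<in>col_supp B mu. col_supp A rho)"
  using op_mult_neq_zeroD unfolding col_supp_def by fastforce

lemma finite_col_supp_op_mult: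
  "finite (col_supp B mu) \<Longrightarrow> (\<forall>rho. finite (col_supp A rho)) \<Longrightarrow> finite (col_supp (op_mult A B) mu)"
  by (meson col_supp_op_mult finite_UN_I finite_subset)

lemma op_mult_assoc:
  assumes B: "\<forall>mu. finite (col_supp B mu)" and C: "\<forall>mu. finite (col_supp C mu)"
  shows "op_mult (op_mult A B) C = op_mult A (op_mult B C)"
proof (intro ext)
  fix lam mu
  define U where "U = (\<Union>rho\<in>col_supp C mu. col_supp B rho)"
  have U: "finite U" using B C unfolding U_def by auto
  have "op_mult (op_mult A B) C lam mu = (\<Sum>rho\<in>col_supp C mu. op_mult A B lam rho * C rho mu)"
    by (rule op_mult_eq_sum) (use C in auto)
  also have "\<dots> = (\<Sum>rho\<in>col_supp C mu. (\<Sum>s\<in>U. A lam s * B s rho) * C rho mu)"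
    by (intro sum.cong refl arg_cong2[where f="(*)"] op_mult_eq_sum U) (auto simp: U_def)
  also have "\<dots> = (\<Sum>s\<in>U. A lam s * (\<Sum>rho\<in>col_supp C mu. B s rho * C rho mu))"
    by (simp add: sum_distrib_left sum_distrib_right mult.assoc) (rule sum.swap)
  also have "\<dots> = (\<Sum>s\<in>U. A lam s * op_mult B C s mu)"
    by (intro sum.cong refl arg_cong2[where f="(*)"] op_mult_eq_sum[symmetric]) (use C in auto)
  also have "\<dots> = op_mult A (op_mult B C) lam mu"
    by (rule op_mult_eq_sum[symmetric, OF U]) (use col_supp_op_mult U_def in auto)
  finally show "op_mult (op_mult A B) C lam mu = op_mult A (op_mult B C) lam mu" .
qed

lemma col_supp_op_id: "col_supp op_id mu = {mu}"
  by (auto simp: col_supp_def op_id_def)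

lemma op_mult_id_left:
  assumes "finite (col_supp A mu)"
  shows "op_mult op_id A lam mu = A lam mu"
proof -
  have "op_mult op_id A lam mu = (\<Sum>rho\<in>insert lam (col_supp A mu). op_id lam rho * A rho mu)"
    by (rule op_mult_eq_sum) (use assms in auto)
  also have "\<dots> = (\<Sum>rho\<in>insert lam (col_supp A mu). if rho = lam then A lam mu else 0)"
    by (intro sum.cong) (auto simp: op_id_def)
  finally show ?thesis using assms by simp
qed

lemma op_mult_id_right: "op_mult A op_id lam mu = A lam mu"
  by (subst op_mult_eq_sum[of "{mu}"]) (auto simp: op_id_def col_supp_def)

lemma op_mult_add_left:
  "finite (col_supp C mu) \<Longrightarrow>
    op_mult (\<lambda>l m. A l m + B l m) C lam mu = op_mult A C lam mu + op_mult B C lam mu"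
  by (simp add: op_mult_eq_sum[of "col_supp C mu"] distrib_right sum.distrib)

lemma op_mult_add_right:
  assumes "finite (col_supp B mu)" "finite (col_supp C mu)"
  shows "op_mult A (\<lambda>l m. B l m + C l m) lam mu = op_mult A B lam mu + op_mult A C lam mu"
proof -
  let ?T = "col_supp B mu \<union> col_supp C mu"
  have "op_mult A X lam mu = (\<Sum>rho\<in>?T. A lam rho * X rho mu)"
    if "X = B \<or> X = C \<or> X = (\<lambda>l m. B l m + C l m)" for X
    by (rule op_mult_eq_sum) (use assms that in \<open>auto simp: col_supp_def\<close>)
  then show ?thesis by (simp add: distrib_left sum.distrib)
qed

lemma finite_col_supp_pointwise:
  assumes "\<forall>mu. finite (col_supp A mu)" "\<forall>mu. finite (col_supp B mu)" "f 0 0 = 0"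
  shows "\<forall>mu. finite (col_supp (\<lambda>lam mu. f (A lam mu) (B lam mu)) mu)"
proof
  fix mu
  have "col_supp (\<lambda>lam mu. f (A lam mu) (B lam mu)) mu \<subseteq> col_supp A mu \<union> col_supp B mu"
    using assms(3) by (auto simp: col_supp_def)
  then show "finite (col_supp (\<lambda>lam mu. f (A lam mu) (B lam mu)) mu)"
    using assms(1,2) by (meson finite_UnI finite_subset)
qed

typedef cfop = "{A::opr. \<forall>mu. finite (col_supp A mu)}"
  by (rule exI[of _ "\<lambda>_ _. 0"]) (simp add: col_supp_def)

setup_lifting type_definition_cfop

instantiation cfop :: ring_1
begin

lift_definition zero_cfop :: cfop is "\<lambda>_ _. 0"
  by (simp add: col_supp_def)

lift_definition one_cfop :: cfop is op_id
  by (simp add: col_supp_op_id)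

lift_definition plus_cfop :: "cfop \<Rightarrow> cfop \<Rightarrow> cfop" is "\<lambda>A B lam mu. A lam mu + B lam mu"
  using finite_col_supp_pointwise[of _ _ "(+)"] by simp

lift_definition uminus_cfop :: "cfop \<Rightarrow> cfop" is "\<lambda>A lam mu. - A lam mu"
  by (simp add: col_supp_def)

lift_definition minus_cfop :: "cfop \<Rightarrow> cfop \<Rightarrow> cfop" is "\<lambda>A B lam mu. A lam mu - B lam mu"
  using finite_col_supp_pointwise[of _ _ "(-)"] by simp

lift_definition times_cfop :: "cfop \<Rightarrow> cfop \<Rightarrow> cfop" is op_mult
  by (simp add: finite_col_supp_op_mult)

instance
proof
  fix a b c :: cfop
  show "a * b * c = a * (b * c)" by transfer (simp add: op_mult_assoc)
  show "(a + b) * c = a * c + b * c" by transfer (simp add: op_mult_add_left fun_eq_iff)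
  show "a * (b + c) = a * b + a * c" by transfer (simp add: op_mult_add_right fun_eq_iff)
  show "1 * a = a" by transfer (simp add: op_mult_id_left fun_eq_iff)
  show "a * 1 = a" by transfer (simp add: op_mult_id_right fun_eq_iff)
  show "a + b + c = a + (b + c)" by transfer (auto simp: algebra_simps)
  show "a + b = b + a" by transfer (auto simp: algebra_simps)
  show "0 + a = a" by transfer auto
  show "- a + a = 0" by transfer auto
  show "a - b = a + - b" by transfer auto
  show "(0::cfop) \<noteq> 1" by transfer (metis op_id_def one_neq_zero)
qed

end

lemma Rep_cfop_sum: "Rep_cfop (sum f S) lam mu = (\<Sum>x\<in>S. Rep_cfop (f x) lam mu)"
  by (induction S rule: infinite_finite_induct) (simp_all add: zero_cfop.rep_eq plus_cfop.rep_eq)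

lemma Rep_cfop_power: "Rep_cfop (x ^ k) = op_pow (Rep_cfop x) k"
  by (induction k) (simp_all add: op_pow_def one_cfop.rep_eq times_cfop.rep_eq)

lemma Rep_cfop_foldr: "Rep_cfop (foldr (*) xs 1) = foldr op_mult (map Rep_cfop xs) op_id"
  by (induction xs) (simp_all add: one_cfop.rep_eq times_cfop.rep_eq)

definition cf_scale :: "K \<Rightarrow> cfop \<Rightarrow> cfop" where
  "cf_scale c A = Abs_cfop (\<lambda>lam mu. c * Rep_cfop A lam mu)"

lemma Rep_cfop_cf_scale: "Rep_cfop (cf_scale c A) = (\<lambda>lam mu. c * Rep_cfop A lam mu)"
  unfolding cf_scale_def
proof (rule Abs_cfop_inverse, safe)
  fix mu
  have "col_supp (\<lambda>lam mu. c * Rep_cfop A lam mu) mu \<subseteq> col_supp (Rep_cfop A) mu"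
    by (auto simp: col_supp_def)
  then show "finite (col_supp (\<lambda>lam mu. c * Rep_cfop A lam mu) mu)"
    using Rep_cfop[of A] by (auto intro: finite_subset)
qed

lemma col_supp_beta: "col_supp (beta j) mu \<subseteq> {del_col j mu}"
  by (auto simp: col_supp_def beta_def)

lemma col_supp_betaS: "col_supp (betaS j) mu \<subseteq> {ins_col j mu}"
  by (auto simp: col_supp_def betaS_def)

lift_definition beta_cf :: "nat \<Rightarrow> cfop" is beta
  using col_supp_beta by (meson finite.emptyI finite_insert finite_subset)

lift_definition betaS_cf :: "nat \<Rightarrow> cfop" is betaS
  using col_supp_betaS by (meson finite.emptyI finite_insert finite_subset)

definition Qterm_cf :: "nat \<Rightarrow> (nat \<Rightarrow> nat) \<Rightarrow> cfop" where
  "Qterm_cf n alpha = betaS_cf 1 ^ alpha n *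
     (foldr (*) (map (\<lambda>i. (beta_cf i * betaS_cf (Suc i)) ^ alpha i) [1..<n]) 1 * beta_cf n ^ alpha n)"

lemma Rep_cfop_Qterm_cf: "Rep_cfop (Qterm_cf n alpha) = Qterm n alpha"
  by (simp add: Qterm_cf_def Qterm_def times_cfop.rep_eq Rep_cfop_power Rep_cfop_foldr o_def
      beta_cf.rep_eq betaS_cf.rep_eq)

definition Qp_cf :: "nat \<Rightarrow> nat \<Rightarrow> cfop" where
  "Qp_cf n r = cf_scale ((-1) ^ r)
     (\<Sum>alpha\<in>comps n r. cf_scale (1 / (\<Prod>i=1..n. qpoch (alpha i))) (Qterm_cf n alpha))"

lemma Rep_cfop_Qp_cf: "Rep_cfop (Qp_cf n r) = Qp n r"
  by (intro ext) (simp add: Qp_cf_def Qp_def Rep_cfop_cf_scale Rep_cfop_sum Rep_cfop_Qterm_cf)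

lemma comps_0: "comps n 0 = {\<lambda>_. 0}"
proof (intro equalityI subsetI)
  fix alpha assume "alpha \<in> comps n 0"
  then have supp: "\<forall>i. alpha i \<noteq> 0 \<longrightarrow> 1 \<le> i \<and> i \<le> n" and "(\<Sum>i=1..n. alpha i) = 0"
    unfolding comps_def mem_Collect_eq by (blast, blast)
  then have "\<forall>i\<in>{1..n}. alpha i = 0" by (simp only: sum_eq_0_iff finite_atLeastAtMost)
  with supp have "alpha = (\<lambda>_. 0)" by (meson atLeastAtMost_iff ext)
  then show "alpha \<in> {\<lambda>_. 0}" by simp
qed (simp add: comps_def)

lemma Qp_cf_0: "Qp_cf n 0 = 1"
proof -
  have "foldr (*) (map (\<lambda>i. 1) xs) 1 = (1::cfop)" for xs :: "nat list"
    by (induction xs) auto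
  then have Qterm: "Qterm_cf n (\<lambda>_. 0) = 1"
    unfolding Qterm_cf_def power_0 by (simp only: mult_1_left mult_1_right)
  have scale: "cf_scale 1 x = x" for x
    by (simp add: cf_scale_def Rep_cfop_inverse)
  have qpoch: "qpoch 0 = 1"
    by (simp add: qpoch_def)
  have singleton: "sum f {x} = f x" for f :: "(nat \<Rightarrow> nat) \<Rightarrow> cfop" and x
    by simp
  show ?thesis
    unfolding Qp_cf_def comps_0 singleton Qterm qpoch prod.neutral_const power_0 div_by_1 scale ..
qed

section \<open>The power series \<open>Q\<^sup>+(v)\<close>\<close>

lemma fps_right_inverse_mult_self:
  fixes f :: "'a::ring_1 fps"
  assumes "fps_nth f 0 = 1"
  shows "fps_right_inverse f 1 * f = 1"
  using fps_left_inverse[of 1 f] fps_left_inverse_eq_fps_right_inverse[of 1 f 1] assms by simp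

definition Q_fps :: "nat \<Rightarrow> cfop fps" where
  "Q_fps n = Abs_fps (Qp_cf n)"

lemma fps_nth_Q_fps: "fps_nth (Q_fps n) k = Qp_cf n k"
  by (simp add: Q_fps_def)

lemma Rep_cfop_Q_fps_right_inverse:
  "Rep_cfop (fps_right_inverse_constructor (Q_fps n) 1 d) = Qinv n d"
proof (induction d rule: less_induct)
  case (less d)
  show ?case
  proof (cases d)
    case 0
    then show ?thesis by (simp add: one_cfop.rep_eq)
  next
    case (Suc e)
    have "Rep_cfop (fps_right_inverse_constructor (Q_fps n) 1 d) lam mu = Qinv n d lam mu" for lam mu
    proof -
      have "Rep_cfop (fps_right_inverse_constructor (Q_fps n) 1 d) lam mu =
          - (\<Sum>k\<in>{1..Suc e}. Rep_cfop (fps_nth (Q_fps n) k *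
              fps_right_inverse_constructor (Q_fps n) 1 (Suc e - k)) lam mu)"
        by (simp only: Suc fps_right_inverse_constructor.simps mult_minus1
            uminus_cfop.rep_eq Rep_cfop_sum)
      also have "\<dots> = - (\<Sum>k\<in>{1..Suc e}. op_mult (Qp n k) (Qinv n (Suc e - k)) lam mu)"
        by (intro arg_cong[where f=uminus] sum.cong refl)
          (auto simp: times_cfop.rep_eq fps_nth_Q_fps Rep_cfop_Qp_cf less.IH Suc)
      finally show ?thesis by (simp add: Suc)
    qed
    then show ?thesis by auto
  qed
qed

definition conj_coeff :: "nat \<Rightarrow> opr \<Rightarrow> nat \<Rightarrow> opr" where
  "conj_coeff n X b = (\<lambda>lam mu. \<Sum>c\<le>b. op_mult (op_mult (Qp n c) X) (Qinv n (b - c)) lam mu)"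

lemma conj_coeff_mult_Qp:
  assumes X: "Rep_cfop Xc = X"
  shows "(\<Sum>a\<le>r. op_mult (conj_coeff n X (r - a)) (Qp n a) lam mu) = op_mult (Qp n r) X lam mu"
proof -
  define Q where "Q = Q_fps n"
  define T where "T = Q * fps_const Xc * fps_right_inverse Q 1"
  have Q0: "fps_nth Q 0 = 1"
    by (simp add: Q_def fps_nth_Q_fps Qp_cf_0)
  have Q: "Rep_cfop (fps_nth Q k) = Qp n k" for k
    by (simp add: Q_def fps_nth_Q_fps Rep_cfop_Qp_cf)
  have R: "Rep_cfop (fps_right_inverse_constructor Q 1 k) = Qinv n k" for k
    unfolding Q_def by (rule Rep_cfop_Q_fps_right_inverse)
  have T: "Rep_cfop (fps_nth T b) = conj_coeff n X b" for b
    by (intro ext) (simp add: T_def conj_coeff_def fps_mult_nth fps_const_mult_right Rep_cfop_sum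
        times_cfop.rep_eq Q R X atLeast0AtMost)
  have "(\<Sum>a\<le>r. op_mult (conj_coeff n X (r - a)) (Qp n a) lam mu)
      = (\<Sum>a\<le>r. Rep_cfop (fps_nth T (r - a) * fps_nth Q a) lam mu)"
    by (simp add: times_cfop.rep_eq Q T)
  also have "\<dots> = (\<Sum>i=0..r. Rep_cfop (fps_nth T i * fps_nth Q (r - i)) lam mu)"
    by (subst sum.atLeastAtMost_rev) (simp add: atLeast0AtMost)
  also have "\<dots> = Rep_cfop (fps_nth (T * Q) r) lam mu"
    by (simp add: fps_mult_nth Rep_cfop_sum)
  also have "T * Q = Q * fps_const Xc"
    by (simp add: T_def mult.assoc fps_right_inverse_mult_self[OF Q0])
  also have "Rep_cfop (fps_nth (Q * fps_const Xc) r) lam mu = op_mult (Qp n r) X lam mu"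
    by (simp add: fps_const_mult_right times_cfop.rep_eq Q X)
  finally show ?thesis .
qed

section \<open>Partitions with at most \<open>n\<close> parts\<close>

definition preserves_parts :: "nat \<Rightarrow> opr \<Rightarrow> bool" where
  "preserves_parts n A \<longleftrightarrow> (\<forall>mu rho. is_part n mu \<longrightarrow> A rho mu \<noteq> 0 \<longrightarrow> is_part n rho)"

lemma preserves_parts_op_mult:
  assumes "preserves_parts n A" "preserves_parts n B"
  shows "preserves_parts n (op_mult A B)"
  unfolding preserves_parts_def
proof (intro allI impI)
  fix mu rho assume mu: "is_part n mu" and "op_mult A B rho mu \<noteq> 0"
  then obtain s where "A rho s \<noteq> 0" "B s mu \<noteq> 0"
    using op_mult_neq_zeroD by blast
  with assms mu show "is_part n rho"
    unfolding preserves_parts_def by blast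
qed

lemma preserves_parts_op_id: "preserves_parts n op_id"
  by (simp add: preserves_parts_def op_id_def)

lemma preserves_parts_op_pow: "preserves_parts n A \<Longrightarrow> preserves_parts n (op_pow A k)"
  by (induction k) (simp_all add: op_pow_def preserves_parts_op_id preserves_parts_op_mult)

lemma preserves_parts_foldr:
  "\<forall>A\<in>set As. preserves_parts n A \<Longrightarrow> preserves_parts n (foldr op_mult As op_id)"
  by (induction As) (simp_all add: preserves_parts_op_id preserves_parts_op_mult)

lemma is_part_ins_col:
  assumes mu: "is_part n mu" and j: "1 \<le> j" "j \<le> n"
  shows "is_part n (ins_col j mu)"
  unfolding is_part_def
proof (intro conjI allI impI)
  fix i :: nat assume "i = 0 \<or> n < i"
  with mu j show "ins_col j mu i = 0"
    by (auto simp: is_part_def ins_col_def)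
next
  fix i :: nat assume "1 \<le> i"
  with mu have "mu (Suc i) \<le> mu i"
    by (simp add: is_part_def)
  then show "ins_col j mu (Suc i) \<le> ins_col j mu i"
    using \<open>1 \<le> i\<close> by (simp add: ins_col_def)
qed

lemma is_part_del_col:
  assumes mu: "is_part n mu" and m: "0 < mult j mu" and j: "1 \<le> j" "j \<le> n"
  shows "is_part n (del_col j mu)"
  unfolding is_part_def
proof (intro conjI allI impI)
  fix i :: nat assume "i = 0 \<or> n < i"
  with mu j show "del_col j mu i = 0"
    by (auto simp: is_part_def del_col_def)
next
  fix i :: nat assume "1 \<le> i"
  with mu have "mu (Suc i) \<le> mu i"
    by (simp add: is_part_def)
  moreover have "mu (Suc j) < mu j"
    using m by (simp add: mult_def)
  ultimately show "del_col j mu (Suc i) \<le> del_col j mu i"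
    using \<open>1 \<le> i\<close> by (cases "i = j") (simp_all add: del_col_def diff_le_mono)
qed

lemma preserves_parts_beta: "1 \<le> j \<Longrightarrow> j \<le> n \<Longrightarrow> preserves_parts n (beta j)"
  unfolding preserves_parts_def beta_def by (auto intro: is_part_del_col split: if_splits)

lemma preserves_parts_betaS: "1 \<le> j \<Longrightarrow> j \<le> n \<Longrightarrow> preserves_parts n (betaS j)"
  unfolding preserves_parts_def betaS_def by (auto intro: is_part_ins_col split: if_splits)

lemma preserves_parts_Qterm:
  assumes "1 \<le> n"
  shows "preserves_parts n (Qterm n alpha)"
proof -
  have "\<forall>A\<in>set (map (\<lambda>i. op_pow (op_mult (beta i) (betaS (Suc i))) (alpha i)) [1..<n]).
      preserves_parts n A"
    by (auto intro!: preserves_parts_op_pow preserves_parts_op_mult preserves_parts_beta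
        preserves_parts_betaS)
  then show ?thesis
    unfolding Qterm_def using assms
    by (intro preserves_parts_op_mult preserves_parts_op_pow preserves_parts_beta
        preserves_parts_betaS preserves_parts_foldr order_refl)
qed

lemma preserves_parts_Qp:
  assumes "1 \<le> n"
  shows "preserves_parts n (Qp n r)"
  unfolding preserves_parts_def
proof (intro allI impI)
  fix mu rho assume mu: "is_part n mu" and "Qp n r rho mu \<noteq> 0"
  then have "(\<Sum>alpha\<in>comps n r. Qterm n alpha rho mu / (\<Prod>i=1..n. qpoch (alpha i))) \<noteq> 0"
    by (simp add: Qp_def)
  then obtain alpha where "Qterm n alpha rho mu \<noteq> 0"
    using sum.not_neutral_contains_not_neutral by fastforce
  with mu show "is_part n rho"
    using preserves_parts_Qterm[OF assms] unfolding preserves_parts_def by blast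
qed

lemma fsum_parts_eq_op_mult_Qp:
  assumes "1 \<le> n" "is_part n mu"
  shows "fsum {rho. is_part n rho} (\<lambda>rho. A lam rho * Qp n a rho mu) = op_mult A (Qp n a) lam mu"
  unfolding op_mult_def
  by (rule fsum_restrict_UNIV) (use assms preserves_parts_Qp in \<open>auto simp: preserves_parts_def\<close>)

lemma sum_fsum_parts_conj_coeff:
  assumes "1 \<le> n" "is_part n mu" "Rep_cfop Xc = X"
  shows "(\<Sum>a\<le>r. fsum {rho. is_part n rho} (\<lambda>rho. conj_coeff n X (r - a) lam rho * Qp n a rho mu))
    = op_mult (Qp n r) X lam mu"
  using conj_coeff_mult_Qp[OF assms(3)] by (simp add: fsum_parts_eq_op_mult_Qp[OF assms(1,2)])

section \<open>The fusion identities\<close>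

lemma op_mult_beta: "op_mult A (beta j) lam mu = (if 0 < mult j mu then A lam (del_col j mu) else 0)"
  by (subst op_mult_eq_sum[of "{del_col j mu}"]) (auto simp: col_supp_beta beta_def)

lemma op_mult_betaS: "op_mult A (betaS j) lam mu = A lam (ins_col j mu) * (1 - qq ^ (2 * mult j mu + 2))"
  by (subst op_mult_eq_sum[of "{ins_col j mu}"]) (auto simp: col_supp_betaS betaS_def)

lemma minus_one_power_mult_Ncoef: "(-1) ^ a * Ncoef n a rho mu = Qp n a rho mu"
  unfolding Ncoef_def mult.assoc[symmetric] power_mult_distrib[symmetric] by simp

lemma one_minus_qq_power_neq_zero: "1 - qq ^ Suc k \<noteq> 0"
proof
  have qq_power: "qq ^ m = Fract ([:0, 1:] ^ m) 1" for m
    by (induction m) (simp_all add: qq_def One_fract_def)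
  assume "1 - qq ^ Suc k = 0"
  then have "qq ^ Suc k = 1"
    by simp
  then have "Fract ([:0, 1:] ^ Suc k) 1 = Fract (1::complex poly) 1"
    unfolding qq_power One_fract_def .
  then have "([:0, 1:] ^ Suc k :: complex poly) = 1"
    by (simp add: eq_fract)
  then have "degree ([:0, 1:] ^ Suc k :: complex poly) = 0"
    by simp
  then show False
    by (simp add: degree_power_eq)
qed

lemma tbeta_eq_conj_coeff: "tbeta n j = conj_coeff n (beta j)"
  by (simp add: tbeta_def conj_coeff_def fun_eq_iff)

lemma tbetaS_eq_conj_coeff: "tbetaS n j = conj_coeff n (betaS j)"
  by (simp add: tbetaS_def conj_coeff_def fun_eq_iff)

lemma fusion_tbeta:
  assumes "1 \<le> n" "is_part n mu"
  shows "(\<Sum>a\<le>r. fsum {rho. is_part n rho}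
            (\<lambda>rho. (-1) ^ a * Ncoef n a rho mu * tbeta n j (r - a) lam rho))
         = (if 0 < mult j mu then (-1) ^ r * Ncoef n r lam (del_col j mu) else 0)"
proof -
  have "(-1) ^ a * Ncoef n a rho mu * tbeta n j b lam rho
      = conj_coeff n (beta j) b lam rho * Qp n a rho mu" for a b rho
    unfolding minus_one_power_mult_Ncoef tbeta_eq_conj_coeff by (rule mult.commute)
  then have "(\<Sum>a\<le>r. fsum {rho. is_part n rho}
            (\<lambda>rho. (-1) ^ a * Ncoef n a rho mu * tbeta n j (r - a) lam rho))
      = op_mult (Qp n r) (beta j) lam mu"
    by (simp only: sum_fsum_parts_conj_coeff[OF assms beta_cf.rep_eq])
  then show ?thesis
    by (simp only: op_mult_beta minus_one_power_mult_Ncoef)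
qed

lemma fusion_tbetaS:
  assumes "1 \<le> n" "is_part n mu"
  shows "(\<Sum>a\<le>r. fsum {rho. is_part n rho}
            (\<lambda>rho. (-1) ^ a * Ncoef n a rho mu / (1 - qq ^ (2 * mult j mu + 2)) * tbetaS n j (r - a) lam rho))
         = (-1) ^ r * Ncoef n r lam (ins_col j mu)"
proof -
  define c where "c = 1 - qq ^ (2 * mult j mu + 2)"
  have "c \<noteq> 0"
    unfolding c_def using one_minus_qq_power_neq_zero[of "2 * mult j mu + 1"] by simp
  have "(-1) ^ a * Ncoef n a rho mu / c * tbetaS n j b lam rho
      = conj_coeff n (betaS j) b lam rho * Qp n a rho mu / c" for a b rho
    unfolding minus_one_power_mult_Ncoef tbetaS_eq_conj_coeff by (simp add: mult.commute)
  then have "(\<Sum>a\<le>r. fsum {rho. is_part n rho}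
            (\<lambda>rho. (-1) ^ a * Ncoef n a rho mu / c * tbetaS n j (r - a) lam rho))
      = op_mult (Qp n r) (betaS j) lam mu / c"
    by (simp only: fsum_divide sum_divide_distrib[symmetric]
        sum_fsum_parts_conj_coeff[OF assms betaS_cf.rep_eq])
  also have "\<dots> = (-1) ^ r * Ncoef n r lam (ins_col j mu)"
    using \<open>c \<noteq> 0\<close> unfolding op_mult_betaS minus_one_power_mult_Ncoef c_def by simp
  finally show ?thesis
    unfolding c_def .
qed

theorem mainTheorem2:
  fixes n r j :: nat and lam mu :: part
  assumes "1 \<le> n" and "1 \<le> j" and "j \<le> n"
    and "is_part n lam" and "is_part n mu"
  shows "(\<Sum>a\<le>r. fsum {rho. is_part n rho}
            (\<lambda>rho. (-1) ^ a * Ncoef n a rho mu * tbeta n j (r - a) lam rho))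
         = (if 0 < mult j mu then (-1) ^ r * Ncoef n r lam (del_col j mu) else 0)
       \<and> (\<Sum>a\<le>r. fsum {rho. is_part n rho}
            (\<lambda>rho. (-1) ^ a * Ncoef n a rho mu / (1 - qq ^ (2 * mult j mu + 2)) * tbetaS n j (r - a) lam rho))
         = (-1) ^ r * Ncoef n r lam (ins_col j mu)"
  using fusion_tbeta[OF assms(1,5)] fusion_tbetaS[OF assms(1,5)] ..

end
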